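(* Let $\xi_{\{\mu\}},\xi_{\{\sigma\}}$ be global conformal Killing vector fields on $\mathbb{E}^2$ with parameters $\mu=(\mu_0,\mu_1,\mu_2)$ and $\sigma=(\sigma_0,\sigma_1,\sigma_2)$, and assume $\xi_{\{\mu\}}$ is not the zero vector field. Then: 1. $\xi_{\{\sigma\}}$ is everywhere orthogonal (with respect to $g_E$) to $\xi_{\{\mu\}}$ if and only if $\sigma=i\,r\,\mu$ for some $r\in\mathbb{R}$. 2. $\xi_{\{\sigma\}}$ commutes with $\xi_{\{\mu\}}$ if and only if $\sigma=c\,\mu$ for some $c\in\mathbb{C}$. Moreover, for every $c\in\mathbb{C}$ and every $p\in\mathbb{E}^2$, $g_E(\xi_{\{c\mu\}},\xi_{\{c\mu\}})|_p=|c|^2\,g_E(\xi_{\{\mu\}},\xi_{\{\mu\}})|_p$.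
   Context: $\mathbb{E}^2$ is the Euclidean plane with Cartesian coordinates $\{x,y\}$ and metric $g_E=dx^2+dy^2$; set $z=\frac12(x-iy)$, so $g_E=4\,dz\,d\bar z$. For $\mu=(\mu_0,\mu_1,\mu_2)\in\mathbb{C}^3$ the global conformal Killing vector (GCKV) with parameters $\mu$ is $\xi_{\{\mu\}}=(\mu_0+\mu_1z+\frac12\mu_2z^2)\partial_z+(\bar\mu_0+\bar\mu_1\bar z+\frac12\bar\mu_2\bar z^2)\partial_{\bar z}$; these are exactly the conformal Killing vectors of $g_E$ that extend smoothly to the Riemann sphere. *)

theory Defs
  imports "HOL-Analysis.Analysis"
begin

text \<open>Points of the Euclidean plane are pairs (x,y) :: real \<times> real; the metric g_E = dx^2+dy^2
  is the standard inner product on real \<times> real.  Vector fields are maps from points to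
  their Cartesian components (X^x, X^y).\<close>

type_synonym point = "real \<times> real"
type_synonym vfield = "point \<Rightarrow> real \<times> real"
type_synonym params = "complex \<times> complex \<times> complex"

definition zcoord :: "point \<Rightarrow> complex" where
  "zcoord p = Complex (fst p) (- snd p) / 2"

fun gckv_coeff :: "params \<Rightarrow> complex \<Rightarrow> complex" where
  "gckv_coeff (m0, m1, m2) z = m0 + m1 * z + m2 * z^2 / 2"

text \<open>Since x = z + conj z and y = i (z - conj z), one has partial_z = partial_x + i partial_y and
  partial_zbar = partial_x - i partial_y, so
  f partial_z + conj f partial_zbar = 2 Re f partial_x - 2 Im f partial_y.\<close>
definition gckv :: "params \<Rightarrow> vfield" where
  "gckv mu p = (let f = gckv_coeff mu (zcoord p) in (2 * Re f, - 2 * Im f))"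

definition gE :: "vfield \<Rightarrow> vfield \<Rightarrow> point \<Rightarrow> real" where
  "gE X Y p = inner (X p) (Y p)"

definition lie_bracket :: "vfield \<Rightarrow> vfield \<Rightarrow> vfield" where
  "lie_bracket X Y p = frechet_derivative Y (at p) (X p) - frechet_derivative X (at p) (Y p)"

fun scale_params :: "complex \<Rightarrow> params \<Rightarrow> params" where
  "scale_params c (m0, m1, m2) = (c * m0, c * m1, c * m2)"

end

theory Submission
  imports Defs
begin

text \<open>Write \<xi>_\<mu> = f_\<mu> \<partial>_z + cnj f_\<mu> \<partial>_zbar with f_\<mu>(z) = \<mu>0 + \<mu>1 z + \<mu>2 z^2/2.
  Then g_E(\<xi>_\<sigma>, \<xi>_\<mu>) = 4 Re (f_\<sigma> cnj f_\<mu>), and [\<xi>_\<sigma>, \<xi>_\<mu>] is the field of the Wronskian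
  f_\<sigma> f_\<mu>' - f_\<mu> f_\<sigma>', a quadratic polynomial whose coefficients are the 2 \<times> 2 minors
  of (\<sigma>, \<mu>). Expanding Re (f_\<sigma> cnj f_\<mu>) in z and cnj z, its vanishing forces
  \<sigma>j cnj \<mu>k + cnj \<sigma>k \<mu>j = 0 for all j, k, which (pivoting on a nonzero \<mu>k) means
  \<sigma> = i r \<mu> with r real; vanishing of the minors means \<sigma> = c \<mu>. The scaling identity
  is just |c f|^2 = |c|^2 |f|^2.\<close>

definition zfield :: "(complex \<Rightarrow> complex) \<Rightarrow> vfield" where
  "zfield f p = (2 * Re (f (zcoord p)), - 2 * Im (f (zcoord p)))"

lemma gckv_eq_zfield: "gckv m = zfield (gckv_coeff m)"
  by (simp add: fun_eq_iff gckv_def zfield_def Let_def)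

lemma zcoord_zfield: "zcoord (zfield f p) = f (zcoord p)"
  by (simp add: zfield_def zcoord_def complex_eq_iff)

lemma surj_zcoord: "surj zcoord"
  by (rule surjI[where f = "\<lambda>z. zfield (\<lambda>_. z) 0"]) (rule zcoord_zfield)

lemma all_zcoord_iff: "(\<forall>p. P (zcoord p)) \<longleftrightarrow> (\<forall>z. P z)"
  using surj_zcoord by (metis surjD)

lemma zfield_eq_0_iff: "(\<forall>p. zfield f p = 0) \<longleftrightarrow> (\<forall>z. f z = 0)"
proof -
  have "zfield f p = 0 \<longleftrightarrow> f (zcoord p) = 0" for p
    by (simp add: zfield_def zero_prod_def complex_eq_iff)
  then show ?thesis
    using all_zcoord_iff[of "\<lambda>z. f z = 0"] by simp
qed

lemma gE_zfield: "gE (zfield f) (zfield g) p = 4 * Re (f (zcoord p) * cnj (g (zcoord p)))"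
  by (simp add: gE_def zfield_def algebra_simps)

lemma has_derivative_zcoord: "(zcoord has_derivative zcoord) (at p)"
proof -
  have eq: "zcoord = (\<lambda>p. (of_real (fst p) - \<i> * of_real (snd p)) / 2)"
    by (simp add: fun_eq_iff zcoord_def Complex_eq)
  have "(zcoord has_derivative (\<lambda>p. (of_real (fst p) - \<i> * of_real (snd p)) / 2)) (at p)"
    unfolding eq by (auto intro!: derivative_eq_intros)
  then show ?thesis
    by (simp flip: eq)
qed

lemma has_derivative_zfield:
  assumes "(f has_field_derivative f') (at (zcoord p))"
  shows "(zfield f has_derivative (\<lambda>v. (2 * Re (f' * zcoord v), - 2 * Im (f' * zcoord v)))) (at p)"
proof -
  have "((\<lambda>p. f (zcoord p)) has_derivative (\<lambda>v. f' * zcoord v)) (at p)"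
    using has_derivative_compose[OF has_derivative_zcoord assms[unfolded has_field_derivative_def]] .
  then show ?thesis
    unfolding zfield_def[abs_def] by (auto intro!: derivative_eq_intros)
qed

lemma lie_bracket_zfield:
  assumes "\<And>z. (f has_field_derivative f' z) (at z)" and "\<And>z. (g has_field_derivative g' z) (at z)"
  shows "lie_bracket (zfield f) (zfield g) = zfield (\<lambda>z. f z * g' z - g z * f' z)"
  unfolding lie_bracket_def fun_eq_iff
    frechet_derivative_at[OF has_derivative_zfield[OF assms(1)], symmetric]
    frechet_derivative_at[OF has_derivative_zfield[OF assms(2)], symmetric]
  by (simp add: zcoord_zfield) (simp add: zfield_def algebra_simps)

lemma coeffs_eq_0_if_quadratic_eq_0:
  fixes a b c :: "'a::field_char_0"
  assumes "\<And>z. a + b * z + c * z^2 = 0"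
  shows "a = 0 \<and> b = 0 \<and> c = 0"
  using assms[of 0] assms[of 1] assms[of "-1"] by (simp add: algebra_simps)

lemma coeffs_eq_0_if_z_zbar_quartic_eq_0:
  fixes E0 E1 E2 :: real and A B C :: complex
  assumes "\<And>z. E0 + E1 * (cmod z)^2 + E2 * (cmod z)^4 + Re (A * z) + Re (B * z^2)
      + (cmod z)^2 * Re (C * z) = 0"
  shows "E0 = 0 \<and> E1 = 0 \<and> E2 = 0 \<and> A = 0 \<and> B = 0 \<and> C = 0"
proof -
  have h: "E0 + E1 * ((Re z)^2 + (Im z)^2) + E2 * ((Re z)^2 + (Im z)^2)^2 + Re (A * z)
      + Re (B * z^2) + ((Re z)^2 + (Im z)^2) * Re (C * z) = 0" for z
    using assms[of z] unfolding cmod_power2[symmetric] by (simp flip: power_mult)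
  have "E0 = 0 \<and> E1 = 0 \<and> E2 = 0 \<and> Re A = 0 \<and> Im A = 0 \<and> Re B = 0 \<and> Im B = 0
      \<and> Re C = 0 \<and> Im C = 0"
    using h[of 0] h[of 1] h[of "-1"] h[of 2] h[of "-2"] h[of "\<i>"] h[of "-\<i>"] h[of "2 * \<i>"]
      h[of "1 + \<i>"]
    by (simp add: power2_eq_square)
  then show ?thesis
    by (simp add: complex_eq_iff)
qed

lemma imaginary_multiple_if_skew_pairing:
  fixes s m :: "'i \<Rightarrow> complex"
  assumes pivot: "m k \<noteq> 0" and skew: "\<And>j. s j * cnj (m k) + cnj (s k) * m j = 0"
  shows "\<exists>r::real. \<forall>j. s j = \<i> * r * m j"
proof -
  define r where "r = Im (s k * cnj (m k)) / (cmod (m k))^2"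
  have "Re (s k * cnj (m k)) = 0"
    using skew[of k] by (simp add: complex_eq_iff algebra_simps)
  then have "s k * cnj (m k) = \<i> * of_real (Im (s k * cnj (m k)))"
    by (simp add: complex_eq_iff)
  also have "Im (s k * cnj (m k)) = r * (cmod (m k))^2"
    using pivot by (simp add: r_def)
  also have "\<i> * of_real (r * (cmod (m k))^2) = \<i> * r * (m k * cnj (m k))"
    by (metis complex_norm_square mult.assoc of_real_mult)
  finally have sk: "s k = \<i> * r * m k"
    using pivot by (simp add: mult.assoc)
  have "s j = \<i> * r * m j" for j
  proof -
    have "s j * cnj (m k) = \<i> * r * m j * cnj (m k)"
      using skew[of j] by (simp add: sk algebra_simps add_eq_0_iff)
    then show ?thesis
      using pivot by simp
  qed
  then show ?thesis
    by blast
qed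

lemma proportional_if_minors_vanish:
  fixes s m :: "'i \<Rightarrow> 'a::field"
  assumes "m k \<noteq> 0" and "\<And>j. s j * m k = s k * m j"
  shows "\<exists>c. \<forall>j. s j = c * m j"
  using assms by (intro exI[of _ "s k / m k"]) (simp add: field_simps)

lemma gE_gckv:
  "gE (gckv s) (gckv m) p = 4 * Re (gckv_coeff s (zcoord p) * cnj (gckv_coeff m (zcoord p)))"
  by (simp add: gckv_eq_zfield gE_zfield)

lemma gckv_coeff_scale_params: "gckv_coeff (scale_params c m) z = c * gckv_coeff m z"
  by (cases m) (simp add: algebra_simps)

text \<open>Indices beyond 2 repeat the last component, so statements about all j need no range guard.\<close>
definition param_comp :: "params \<Rightarrow> nat \<Rightarrow> complex" where
  "param_comp m j = (case m of (m0, m1, m2) \<Rightarrow> if j = 0 then m0 else if j = 1 then m1 else m2)"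

lemma eq_scale_params_iff: "s = scale_params c m \<longleftrightarrow> (\<forall>j. param_comp s j = c * param_comp m j)"
proof -
  obtain s0 s1 s2 m0 m1 m2 where "s = (s0, s1, s2)" and "m = (m0, m1, m2)"
    by (metis prod.exhaust)
  then show ?thesis
    by (force simp: param_comp_def)
qed

lemma ex_param_comp_nonzero:
  assumes "gckv m \<noteq> (\<lambda>p. 0)"
  shows "\<exists>k. param_comp m k \<noteq> 0"
proof (rule ccontr)
  assume "\<nexists>k. param_comp m k \<noteq> 0"
  then have "m = scale_params 0 m"
    by (simp add: eq_scale_params_iff)
  then have "gckv_coeff m z = 0" for z
    by (metis gckv_coeff_scale_params mult_zero_left)
  then show False
    using assms by (simp add: gckv_eq_zfield zfield_def fun_eq_iff zero_prod_def)
qed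

lemma Re_gckv_coeff_mult_cnj:
  fixes s0 s1 s2 m0 m1 m2 z :: complex
  shows "Re (gckv_coeff (s0, s1, s2) z * cnj (gckv_coeff (m0, m1, m2) z)) =
      Re (s0 * cnj m0) + Re (s1 * cnj m1) * (cmod z)^2 + Re (s2 * cnj m2) / 4 * (cmod z)^4
    + Re ((s1 * cnj m0 + cnj s0 * m1) * z) + Re ((s2 * cnj m0 + cnj s0 * m2) / 2 * z^2)
    + (cmod z)^2 * Re ((s2 * cnj m1 + cnj s1 * m2) / 2 * z)"
proof -
  have "(cmod z)^4 = ((Re z)^2 + (Im z)^2)^2"
    by (simp flip: cmod_power2)
  then show ?thesis
    unfolding cmod_power2 by (simp add: power2_eq_square field_simps)
qed

lemma has_field_derivative_gckv_coeff:
  "(gckv_coeff (m0, m1, m2) has_field_derivative m1 + m2 * z) (at z)"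
proof -
  have "gckv_coeff (m0, m1, m2) = (\<lambda>z. m0 + m1 * z + m2 * z^2 / 2)"
    by (simp add: fun_eq_iff)
  then show ?thesis
    by (auto intro!: derivative_eq_intros)
qed

lemma lie_bracket_gckv:
  "lie_bracket (gckv (s0, s1, s2)) (gckv (m0, m1, m2)) =
     zfield (\<lambda>z. (s0 * m1 - s1 * m0) + (s0 * m2 - s2 * m0) * z + (s1 * m2 - s2 * m1) / 2 * z^2)"
  unfolding gckv_eq_zfield
    lie_bracket_zfield[OF has_field_derivative_gckv_coeff has_field_derivative_gckv_coeff]
  by (intro arg_cong[where f = zfield]) (simp add: fun_eq_iff power2_eq_square field_simps)

lemma orthogonal_gckv_imp_skew_pairing:
  assumes "\<forall>p. gE (gckv s) (gckv m) p = 0"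
  shows "param_comp s j * cnj (param_comp m k) + cnj (param_comp s k) * param_comp m j = 0"
proof -
  obtain s0 s1 s2 m0 m1 m2 where s: "s = (s0, s1, s2)" and m: "m = (m0, m1, m2)"
    by (metis prod.exhaust)
  have "\<forall>p. Re (gckv_coeff s (zcoord p) * cnj (gckv_coeff m (zcoord p))) = 0"
    using assms by (metis gE_gckv mult_eq_0_iff zero_neq_numeral)
  then have "Re (gckv_coeff s z * cnj (gckv_coeff m z)) = 0" for z
    unfolding all_zcoord_iff[of "\<lambda>z. Re (gckv_coeff s z * cnj (gckv_coeff m z)) = 0"] by blast
  from coeffs_eq_0_if_z_zbar_quartic_eq_0[OF this[unfolded s m Re_gckv_coeff_mult_cnj]]
  show ?thesis
    by (auto simp: param_comp_def s m complex_eq_iff algebra_simps)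
qed

lemma commuting_gckv_imp_minors_vanish:
  assumes "\<forall>p. lie_bracket (gckv s) (gckv m) p = 0"
  shows "param_comp s j * param_comp m k = param_comp s k * param_comp m j"
proof -
  obtain s0 s1 s2 m0 m1 m2 where s: "s = (s0, s1, s2)" and m: "m = (m0, m1, m2)"
    by (metis prod.exhaust)
  have "s0 * m1 - s1 * m0 = 0 \<and> s0 * m2 - s2 * m0 = 0 \<and> (s1 * m2 - s2 * m1) / 2 = 0"
    using assms unfolding s m lie_bracket_gckv zfield_eq_0_iff
    by (intro coeffs_eq_0_if_quadratic_eq_0) blast
  then show ?thesis
    by (auto simp: param_comp_def s m algebra_simps)
qed

lemma orthogonal_gckv_iff:
  assumes "param_comp m k \<noteq> 0"
  shows "(\<forall>p. gE (gckv s) (gckv m) p = 0) \<longleftrightarrow> (\<exists>r::real. s = scale_params (\<i> * r) m)"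
proof
  assume "\<forall>p. gE (gckv s) (gckv m) p = 0"
  then have "\<exists>r::real. \<forall>j. param_comp s j = \<i> * r * param_comp m j"
    using assms by (intro imaginary_multiple_if_skew_pairing orthogonal_gckv_imp_skew_pairing)
  then show "\<exists>r::real. s = scale_params (\<i> * r) m"
    by (auto simp: eq_scale_params_iff)
next
  assume "\<exists>r::real. s = scale_params (\<i> * r) m"
  then show "\<forall>p. gE (gckv s) (gckv m) p = 0"
    by (auto simp: gE_gckv gckv_coeff_scale_params mult.assoc complex_mult_cnj)
qed

lemma commuting_gckv_iff:
  assumes "param_comp m k \<noteq> 0"
  shows "(\<forall>p. lie_bracket (gckv s) (gckv m) p = 0) \<longleftrightarrow> (\<exists>c. s = scale_params c m)"
proof
  assume "\<forall>p. lie_bracket (gckv s) (gckv m) p = 0"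
  then have "\<exists>c. \<forall>j. param_comp s j = c * param_comp m j"
    using assms by (intro proportional_if_minors_vanish commuting_gckv_imp_minors_vanish)
  then show "\<exists>c. s = scale_params c m"
    by (simp add: eq_scale_params_iff)
next
  assume "\<exists>c. s = scale_params c m"
  then show "\<forall>p. lie_bracket (gckv s) (gckv m) p = 0"
    by (cases m) (auto simp: lie_bracket_gckv zfield_def zero_prod_def algebra_simps)
qed

lemma gE_gckv_scale_params:
  "gE (gckv (scale_params c m)) (gckv (scale_params c m)) p = (cmod c)^2 * gE (gckv m) (gckv m) p"
proof -
  have "Re (c * w * cnj (c * w)) = (cmod c)^2 * Re (w * cnj w)" for w
    by (simp only: complex_norm_square[symmetric] Re_complex_of_real norm_mult power_mult_distrib)
  then show ?thesis
    by (simp add: gE_gckv gckv_coeff_scale_params)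
qed

theorem lemma5p1:
  fixes mu sigma :: params
  assumes nonzero: "gckv mu \<noteq> (\<lambda>p. 0)"
  shows "((\<forall>p. gE (gckv sigma) (gckv mu) p = 0) \<longleftrightarrow>
            (\<exists>r::real. sigma = scale_params (\<i> * complex_of_real r) mu))
       \<and> ((\<forall>p. lie_bracket (gckv sigma) (gckv mu) p = 0) \<longleftrightarrow>
            (\<exists>c::complex. sigma = scale_params c mu))
       \<and> (\<forall>(c::complex) p. gE (gckv (scale_params c mu)) (gckv (scale_params c mu)) p
              = (cmod c)^2 * gE (gckv mu) (gckv mu) p)"
proof -
  obtain k where "param_comp mu k \<noteq> 0"
    using ex_param_comp_nonzero[OF nonzero] ..
  then show ?thesis
    using orthogonal_gckv_iff commuting_gckv_iff gE_gckv_scale_params by blast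
qed

end
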